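(* Let $(X,+,d)$ be an Abelian metric group with translation-invariant metric $d$ such that every non-empty open ball in $X$ contains infinitely many elements. Let $A\in K(X)$. If the spectre operator $S:K(X)\to K(X)$ is continuous at $A$ (with respect to the Pompeiu–Hausdorff metric), then $S(A)=\{0\}$.
   Context: $d$ satisfies $d(x,y)=d(x+z,y+z)$ for all $x,y,z\in X$; $0$ is the neutral element. $K(X)$ is the family of non-empty compact subsets of $X$ with the Pompeiu–Hausdorff metric $d_H(A,B)=\max\{\sup_{a\in A}d(a,B),\sup_{b\in B}d(A,b)\}$. The spectre of $A\subset X$ is $S(A):=\{z\in X:\ \forall_{a\in A}\ (a+z\in A \text{ or } a-z\in A)\}$; it is compact for compact non-empty $A$. *)

theory Defs
  imports "HOL-Analysis.Analysis"
begin

text \<open>Pompeiu--Hausdorff distance (intended for non-empty compact sets).\<close>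
definition hausdorff_dist :: "'a::metric_space set \<Rightarrow> 'a set \<Rightarrow> real" where
  "hausdorff_dist A B = max (SUP a\<in>A. infdist a B) (SUP b\<in>B. infdist b A)"

definition spectre :: "'a::ab_group_add set \<Rightarrow> 'a set" where
  "spectre A = {z. \<forall>a\<in>A. a + z \<in> A \<or> a - z \<in> A}"

definition Kset :: "'a::metric_space set set" where
  "Kset = {A. A \<noteq> {} \<and> compact A}"

end

theory Submission
  imports Defs
begin

text \<open>
  Adding to a finite set F (with at least three points) a point x that is not of the form
  p + q - r with p, q, r \<in> F gives a set with trivial spectre. Since every ball is infinite,
  such sets can be placed within any Hausdorff distance of a compact A: take a finite net
  of A and add points near A avoiding finitely many values. Continuity of the spectre at A
  therefore forces S(A) to lie within every distance of {0}, and S(A) is bounded by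
  translation invariance, so S(A) = {0}.
\<close>

lemma zero_in_spectre: "0 \<in> spectre A"
  unfolding spectre_def by simp

lemma uminus_in_spectre: "z \<in> spectre A \<Longrightarrow> - z \<in> spectre A"
  unfolding spectre_def by auto

lemma infdist_le_hausdorff_dist:
  fixes A B :: "'a::metric_space set"
  assumes "a \<in> A" "bounded A" "B \<noteq> {}"
  shows "infdist a B \<le> hausdorff_dist A B"
proof -
  obtain b where b: "b \<in> B" using assms(3) by blast
  obtain r where r: "\<And>x. x \<in> A \<Longrightarrow> dist b x \<le> r"
    using assms(2) unfolding bounded_any_center[of _ b] by blast
  have "bdd_above ((\<lambda>x. infdist x B) ` A)"
  proof (rule bdd_aboveI2)
    fix x assume "x \<in> A"
    then show "infdist x B \<le> r"
      using infdist_le[OF b, of x] r[of x] by (simp add: dist_commute)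
  qed
  then have "infdist a B \<le> (SUP x\<in>A. infdist x B)"
    using assms(1) by (rule cSUP_upper2) simp
  then show ?thesis unfolding hausdorff_dist_def by simp
qed

lemma hausdorff_dist_le:
  fixes A B :: "'a::metric_space set"
  assumes "A \<noteq> {}" "B \<noteq> {}"
    and "\<And>a. a \<in> A \<Longrightarrow> \<exists>b\<in>B. dist a b \<le> r"
    and "\<And>b. b \<in> B \<Longrightarrow> \<exists>a\<in>A. dist b a \<le> r"
  shows "hausdorff_dist A B \<le> r"
proof -
  have "(SUP a\<in>A. infdist a B) \<le> r"
    using assms(1) by (rule cSUP_least) (meson assms(3) infdist_le order_trans)
  moreover have "(SUP b\<in>B. infdist b A) \<le> r"
    using assms(2) by (rule cSUP_least) (meson assms(4) infdist_le order_trans)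
  ultimately show ?thesis unfolding hausdorff_dist_def by simp
qed

lemma bounded_spectre:
  fixes A :: "'a::{metric_space, ab_group_add} set"
  assumes transl_inv: "\<And>x y z :: 'a. dist x y = dist (x + z) (y + z)"
    and "bounded A" "a \<in> A"
  shows "bounded (spectre A)"
proof -
  obtain r where r: "\<And>x y. x \<in> A \<Longrightarrow> y \<in> A \<Longrightarrow> dist x y \<le> r"
    using assms(2) unfolding bounded_two_points by blast
  have "dist 0 z \<le> r" if "z \<in> spectre A" for z
  proof -
    have "a + z \<in> A \<or> a - z \<in> A" using that assms(3) unfolding spectre_def by auto
    moreover have "dist 0 z = dist a (a + z)"
      using transl_inv[of 0 z a] by (simp add: add.commute)
    moreover have "dist 0 z = dist (a - z) a"
      using transl_inv[of 0 z "a - z"] by simp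
    ultimately show ?thesis using r assms(3) by metis
  qed
  then show ?thesis unfolding bounded_any_center[of _ 0] by blast
qed

lemma spectre_insert_eq_zero:
  fixes F :: "'a::ab_group_add set"
  assumes x_generic: "\<And>p q r. p \<in> F \<Longrightarrow> q \<in> F \<Longrightarrow> r \<in> F \<Longrightarrow> x \<noteq> p + q - r"
    and three: "t1 \<in> F" "t2 \<in> F" "t3 \<in> F" "t1 \<noteq> t2" "t1 \<noteq> t3" "t2 \<noteq> t3"
  shows "spectre (insert x F) = {0}"
proof (rule ccontr)
  assume "spectre (insert x F) \<noteq> {0}"
  then obtain z where z: "z \<in> spectre (insert x F)" "z \<noteq> 0"
    using zero_in_spectre by blast
  have "x + z \<in> insert x F \<or> x + - z \<in> insert x F"
    using z(1) unfolding spectre_def by auto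
  then obtain w where w: "w \<in> spectre (insert x F)" "w \<noteq> 0" "x + w \<in> insert x F"
    using z uminus_in_spectre by (metis neg_equal_0_iff_equal)
  then obtain m where m: "m \<in> F" "w = m - x"
    by (auto simp: algebra_simps)
  obtain k where k: "k \<in> F" "k \<noteq> m" "k + m - x \<noteq> x"
  proof -
    have "\<exists>k\<in>{t1, t2, t3}. k \<noteq> m \<and> k \<noteq> x + x - m" using three(4-6) by auto
    then have "\<exists>k\<in>F. k \<noteq> m \<and> k \<noteq> x + x - m" using three(1-3) by blast
    then show thesis using that by (fastforce simp: algebra_simps)
  qed
  have "k + w \<in> insert x F \<or> k - w \<in> insert x F"
    using w(1) k(1) unfolding spectre_def by auto
  then show False
  proof
    assume "k + w \<in> insert x F"
    then have "k + m - x \<in> F" using m(2) k(3) by (auto simp: algebra_simps)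
    from x_generic[OF k(1) m(1) this] show False by simp
  next
    assume "k - w \<in> insert x F"
    then have "k - m + x \<in> F" using m(2) k(2) by (auto simp: algebra_simps)
    from x_generic[OF this m(1) k(1)] show False by simp
  qed
qed

lemma exists_trivial_spectre_approx:
  fixes A :: "'a::{metric_space, ab_group_add} set"
  assumes balls_infinite: "\<And>(x :: 'a) r. r > 0 \<Longrightarrow> infinite (ball x r)"
    and "compact A" "a \<in> A" "d > 0"
  shows "\<exists>B\<in>Kset. hausdorff_dist A B < d \<and> spectre B = {0}"
proof -
  obtain N where N: "N \<subseteq> A" "finite N" "A \<subseteq> (\<Union>c\<in>N. ball c (d/2))"
    using compactE_image[OF \<open>compact A\<close>, of A "\<lambda>c. ball c (d/2)"] \<open>d > 0\<close> by force
  define S where "S = ball a (d/2)"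
  have S_infinite: "infinite S" unfolding S_def using balls_infinite \<open>d > 0\<close> by simp
  obtain T where T: "T \<subseteq> S" "finite T" "card T = 3"
    using infinite_arbitrarily_large[OF S_infinite] by blast
  then obtain t1 t2 t3 where t: "T = {t1, t2, t3}" "t1 \<noteq> t2" "t2 \<noteq> t3" "t1 \<noteq> t3"
    unfolding card_3_iff by blast
  define F where "F = N \<union> T"
  have "finite F" unfolding F_def using N T by simp
  then have "finite ((\<lambda>(p, q, r). p + q - r) ` (F \<times> F \<times> F))" by simp
  then obtain x where x: "x \<in> S" "x \<notin> (\<lambda>(p, q, r). p + q - r) ` (F \<times> F \<times> F)"
    using infinite_imp_nonempty[OF Diff_infinite_finite[OF _ S_infinite]] by blast
  define B where "B = insert x F"
  have "spectre B = {0}"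
    unfolding B_def
  proof (rule spectre_insert_eq_zero[of F x t1 t2 t3])
    show "x \<noteq> p + q - r" if "p \<in> F" "q \<in> F" "r \<in> F" for p q r
      using x(2) that by force
  qed (use t in \<open>auto simp: F_def\<close>)
  moreover have "B \<in> Kset"
    unfolding B_def Kset_def using \<open>finite F\<close> finite_imp_compact by blast
  moreover have "hausdorff_dist A B \<le> d/2"
  proof (rule hausdorff_dist_le)
    show "\<exists>b\<in>B. dist y b \<le> d/2" if "y \<in> A" for y
    proof -
      from N(3) that obtain c where "c \<in> N" "dist c y < d/2" by auto
      then show ?thesis unfolding B_def F_def by (intro bexI[of _ c]) (auto simp: dist_commute)
    qed
    show "\<exists>y\<in>A. dist b y \<le> d/2" if "b \<in> B" for b
    proof -
      have "b \<in> N \<or> b \<in> S" using that x(1) T(1) unfolding B_def F_def by auto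
      then show ?thesis
      proof
        assume "b \<in> N"
        with N(1) \<open>d > 0\<close> show ?thesis by (intro bexI[of _ b]) auto
      next
        assume "b \<in> S"
        with \<open>a \<in> A\<close> show ?thesis unfolding S_def by (intro bexI[of _ a]) (auto simp: dist_commute)
      qed
    qed
  qed (use \<open>a \<in> A\<close> B_def in auto)
  ultimately show ?thesis using \<open>d > 0\<close> by force
qed

theorem corollary3p7:
  fixes A :: "'a::{metric_space, ab_group_add} set"
  assumes transl_inv: "\<And>x y z :: 'a. dist x y = dist (x + z) (y + z)"
    and balls_infinite: "\<And>(x :: 'a) r. r > 0 \<Longrightarrow> infinite (ball x r)"
    and A_K: "A \<in> Kset"
    and cont: "\<forall>e>0. \<exists>\<delta>>0. \<forall>B\<in>Kset. hausdorff_dist A B < \<delta> \<longrightarrow>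
                 hausdorff_dist (spectre A) (spectre B) < e"
  shows "spectre A = {0}"
proof -
  obtain a where "a \<in> A" "compact A" using A_K unfolding Kset_def by auto
  then have bounded: "bounded (spectre A)"
    using bounded_spectre[OF transl_inv] compact_imp_bounded by blast
  have dist_zero: "hausdorff_dist (spectre A) {0} \<le> 0"
  proof (rule field_le_epsilon)
    fix e :: real assume "e > 0"
    then obtain \<delta> where "\<delta> > 0" and \<delta>: "\<forall>B\<in>Kset. hausdorff_dist A B < \<delta> \<longrightarrow>
                 hausdorff_dist (spectre A) (spectre B) < e" using cont by blast
    obtain B where "B \<in> Kset" "hausdorff_dist A B < \<delta>" "spectre B = {0}"
      using exists_trivial_spectre_approx[OF balls_infinite \<open>compact A\<close> \<open>a \<in> A\<close> \<open>\<delta> > 0\<close>] by blast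
    with \<delta> show "hausdorff_dist (spectre A) {0} \<le> 0 + e" by force
  qed
  have "z = 0" if "z \<in> spectre A" for z
  proof -
    have "dist z 0 \<le> hausdorff_dist (spectre A) {0}"
      using infdist_le_hausdorff_dist[OF that bounded, of "{0}"] by simp
    with dist_zero have "dist z 0 \<le> 0" by linarith
    then show ?thesis by simp
  qed
  then show ?thesis using zero_in_spectre by blast
qed

end
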